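(* Let $m_1,m_2,m_3,m_4>0$, $M=\sum m_i$, $I(\mathbf{r})=\frac{1}{2M}\sum_{i<j}m_im_jr_{ij}^2$ and $P(\mathbf{r})=r_{12}r_{34}+r_{14}r_{23}-r_{13}r_{24}$ for $\mathbf{r}=(r_{12},r_{13},r_{14},r_{23},r_{24},r_{34})\in\mathbb{R}^6$. Then the set $\mathcal{M}=\{\mathbf{r}\in\mathbb{R}^6: I(\mathbf{r})=1,\ P(\mathbf{r})=0\}$ is diffeomorphic to the oriented Grassmannian $\mathrm{Gr}_+(2,4)=SO(4)/(SO(2)\times SO(2))$ of oriented 2-planes in $\mathbb{R}^4$, and to $S^2\times S^2$. *)

theory Defs
  imports "HOL-Analysis.Analysis"
begin

text \<open>Taken coinductively (greatest fixed point), this is exactly infinite differentiability.\<close>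
coinductive smooth_on :: "'a::euclidean_space set \<Rightarrow> ('a \<Rightarrow> 'b::euclidean_space) \<Rightarrow> bool"
  for U :: "'a set" where
  "f differentiable_on U \<Longrightarrow>
   (\<And>i. i \<in> Basis \<Longrightarrow> smooth_on U (\<lambda>x. frechet_derivative f (at x) i)) \<Longrightarrow>
   smooth_on U f"

text \<open>Smooth maps on arbitrary subsets of Euclidean space (Milnor): locally the
  restriction of a C-infinity map defined on an open neighbourhood.\<close>
definition smooth_map :: "'a::euclidean_space set \<Rightarrow> ('a \<Rightarrow> 'b::euclidean_space) \<Rightarrow> bool" where
  "smooth_map X f \<longleftrightarrow>
     (\<forall>x\<in>X. \<exists>U F. open U \<and> x \<in> U \<and> smooth_on U F \<and> (\<forall>y\<in>U \<inter> X. F y = f y))"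

definition diffeomorphic_sets :: "'a::euclidean_space set \<Rightarrow> 'b::euclidean_space set \<Rightarrow> bool" where
  "diffeomorphic_sets X Y \<longleftrightarrow>
     (\<exists>f g. f ` X \<subseteq> Y \<and> g ` Y \<subseteq> X \<and> (\<forall>x\<in>X. g (f x) = x) \<and> (\<forall>y\<in>Y. f (g y) = y)
            \<and> smooth_map X f \<and> smooth_map Y g)"

text \<open>Coordinates of r in R^6: r$1 = r12, r$2 = r13, r$3 = r14, r$4 = r23, r$5 = r24, r$6 = r34.\<close>
definition moment_I :: "real \<Rightarrow> real \<Rightarrow> real \<Rightarrow> real \<Rightarrow> real^6 \<Rightarrow> real" where
  "moment_I m1 m2 m3 m4 r =
     (1 / (2 * (m1 + m2 + m3 + m4))) *
       (m1*m2 * (r$1)^2 + m1*m3 * (r$2)^2 + m1*m4 * (r$3)^2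
        + m2*m3 * (r$4)^2 + m2*m4 * (r$5)^2 + m3*m4 * (r$6)^2)"

definition ptolemy_P :: "real^6 \<Rightarrow> real" where
  "ptolemy_P r = (r$1) * (r$6) + (r$3) * (r$4) - (r$2) * (r$5)"

definition shape_M :: "real \<Rightarrow> real \<Rightarrow> real \<Rightarrow> real \<Rightarrow> (real^6) set" where
  "shape_M m1 m2 m3 m4 = {r. moment_I m1 m2 m3 m4 r = 1 \<and> ptolemy_P r = 0}"

text \<open>Pluecker coordinates u \<and> v of a pair of vectors in R^4 (basis e_ij, i<j, lexicographic).\<close>
definition pluecker :: "real^4 \<Rightarrow> real^4 \<Rightarrow> real^6" where
  "pluecker u v = vector
     [u$1 * v$2 - u$2 * v$1, u$1 * v$3 - u$3 * v$1, u$1 * v$4 - u$4 * v$1,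
      u$2 * v$3 - u$3 * v$2, u$2 * v$4 - u$4 * v$2, u$3 * v$4 - u$4 * v$3]"

text \<open>Oriented Grassmannian Gr+(2,4), embedded in \<Lambda>^2 R^4 = R^6 via the Pluecker map:
  an oriented plane with oriented orthonormal basis (u,v) corresponds to u \<and> v.\<close>
definition oriented_grassmannian_2_4 :: "(real^6) set" where
  "oriented_grassmannian_2_4 =
     {pluecker u v | u v. norm u = 1 \<and> norm v = 1 \<and> inner u v = 0}"

definition sphere2_times_sphere2 :: "((real^3) \<times> (real^3)) set" where
  "sphere2_times_sphere2 = sphere 0 1 \<times> sphere 0 1"

end

theory Submission
  imports Defs
begin

text \<open>
  Rescaling each coordinate \<open>r\<^sub>i\<^sub>j\<close> by \<open>sqrt (m\<^sub>i m\<^sub>j / 2M)\<close> is a linear automorphism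
  of \<open>\<real>\<^sup>6\<close> that turns \<open>I\<close> into the squared Euclidean norm and multiplies \<open>P\<close> by the
  positive constant \<open>sqrt (m\<^sub>1 m\<^sub>2 m\<^sub>3 m\<^sub>4) / 2M\<close>, so the shape space is linearly isomorphic to the
  "Ptolemy sphere" \<open>{p. |p| = 1, P p = 0}\<close>. Reading \<open>\<real>\<^sup>6\<close> as \<open>\<Lambda>\<^sup>2\<real>\<^sup>4\<close>, \<open>P\<close> is the
  Pluecker quadric: \<open>P p = 0\<close> means that \<open>p\<close> is a multiple of some \<open>a \<and> b\<close>, and Gram-Schmidt
  on \<open>a, b\<close> writes a unit such \<open>p\<close> as \<open>u \<and> v\<close> with \<open>u, v\<close> orthonormal. So the Ptolemy
  sphere is exactly the Pluecker image of the oriented Grassmannian. Finally, in the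
  bases \<open>e\<^sub>i\<^sub>j \<plusminus> *e\<^sub>i\<^sub>j\<close>, the coordinate vectors of the self-dual and anti-self-dual parts
  \<open>p \<plusminus> *p\<close> have squared norms \<open>|p|\<^sup>2 \<plusminus> 2 P p\<close>, so
  the Ptolemy sphere is a linear image of \<open>S\<^sup>2 \<times> S\<^sup>2\<close>. All maps involved are linear, hence smooth.
\<close>

lemma smooth_on_affine:
  fixes h :: "'a::euclidean_space \<Rightarrow> 'b::euclidean_space"
  assumes "linear h"
  shows "smooth_on U (\<lambda>x. h x + c)"
  using assms
proof (coinduction arbitrary: h c rule: smooth_on.coinduct)
  case smooth_on
  then have deriv: "((\<lambda>x. h x + c) has_derivative h) (at x)" for x
    by (auto intro!: derivative_eq_intros linear_imp_has_derivative)
  then have "frechet_derivative (\<lambda>x. h x + c) (at x) = h" for x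
    by (rule frechet_derivative_at[symmetric])
  moreover have "(\<lambda>x. h x + c) differentiable_on U"
    using deriv differentiable_at_imp_differentiable_on differentiable_def by blast
  ultimately show ?case
    by (auto intro!: exI[of _ "\<lambda>_. 0"] linear_zero)
qed

lemma smooth_map_linear:
  fixes f :: "'a::euclidean_space \<Rightarrow> 'b::euclidean_space"
  assumes "linear f"
  shows "smooth_map X f"
  using smooth_on_affine[OF assms, of UNIV 0] unfolding smooth_map_def by auto

definition linearly_isomorphic_sets :: "'a::euclidean_space set \<Rightarrow> 'b::euclidean_space set \<Rightarrow> bool" where
  "linearly_isomorphic_sets X Y \<longleftrightarrow>
     (\<exists>f g. linear f \<and> linear g \<and> (\<forall>x. g (f x) = x) \<and> (\<forall>y. f (g y) = y) \<and> f ` X = Y)"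

lemma linearly_isomorphic_sets_vimage:
  assumes "linear f" "linear g" "\<And>x. g (f x) = x" "\<And>y. f (g y) = y"
  shows "linearly_isomorphic_sets (f -` Y) Y"
proof -
  have "surj f" using assms(4) by (metis surjI)
  then show ?thesis
    unfolding linearly_isomorphic_sets_def using assms surj_image_vimage_eq by blast
qed

lemma linearly_isomorphic_sets_trans:
  assumes "linearly_isomorphic_sets X Y" "linearly_isomorphic_sets Y Z"
  shows "linearly_isomorphic_sets X Z"
proof -
  obtain f g where "linear f" "linear g" "\<And>x. g (f x) = x" "\<And>y. f (g y) = y" "f ` X = Y"
    using assms(1) unfolding linearly_isomorphic_sets_def by blast
  moreover obtain f' g' where "linear f'" "linear g'" "\<And>x. g' (f' x) = x" "\<And>y. f' (g' y) = y"
    "f' ` Y = Z"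
    using assms(2) unfolding linearly_isomorphic_sets_def by blast
  ultimately show ?thesis
    unfolding linearly_isomorphic_sets_def
    by (intro exI[of _ "f' \<circ> f"] exI[of _ "g \<circ> g'"]) (auto simp: linear_compose image_comp)
qed

lemma diffeomorphic_sets_if_linearly_isomorphic:
  assumes "linearly_isomorphic_sets X Y"
  shows "diffeomorphic_sets X Y"
proof -
  obtain f g where "linear f" "linear g" "\<And>x. g (f x) = x" "\<And>y. f (g y) = y" "f ` X = Y"
    using assms unfolding linearly_isomorphic_sets_def by blast
  then show ?thesis
    unfolding diffeomorphic_sets_def by (intro exI[of _ f] exI[of _ g]) (auto simp: smooth_map_linear)
qed

lemma exhaust_6:
  fixes x :: 6
  shows "x = 1 \<or> x = 2 \<or> x = 3 \<or> x = 4 \<or> x = 5 \<or> x = 6"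
proof (induct x)
  case (of_int z)
  then have "z = 0 \<or> z = 1 \<or> z = 2 \<or> z = 3 \<or> z = 4 \<or> z = 5" by fastforce
  then show ?case by auto
qed

lemma forall_6: "(\<forall>i::6. P i) \<longleftrightarrow> P 1 \<and> P 2 \<and> P 3 \<and> P 4 \<and> P 5 \<and> P 6"
  by (metis exhaust_6)

lemma UNIV_6: "UNIV = {1, 2, 3, 4, 5, 6::6}"
  using exhaust_6 by auto

lemma sum_6: "sum f (UNIV::6 set) = f 1 + f 2 + f 3 + f 4 + f 5 + f 6"
  unfolding UNIV_6 by (simp add: ac_simps)

lemma vector_4 [simp]:
  "(vector [a, b, c, d] :: ('a::zero)^4)$1 = a"
  "(vector [a, b, c, d] :: ('a::zero)^4)$2 = b"
  "(vector [a, b, c, d] :: ('a::zero)^4)$3 = c"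
  "(vector [a, b, c, d] :: ('a::zero)^4)$4 = d"
  unfolding vector_def by simp_all

lemma vector_6 [simp]:
  "(vector [a, b, c, d, e, f] :: ('a::zero)^6)$1 = a"
  "(vector [a, b, c, d, e, f] :: ('a::zero)^6)$2 = b"
  "(vector [a, b, c, d, e, f] :: ('a::zero)^6)$3 = c"
  "(vector [a, b, c, d, e, f] :: ('a::zero)^6)$4 = d"
  "(vector [a, b, c, d, e, f] :: ('a::zero)^6)$5 = e"
  "(vector [a, b, c, d, e, f] :: ('a::zero)^6)$6 = f"
  unfolding vector_def by simp_all

lemma vec_6_eq_iff:
  "(x::'a^6) = y \<longleftrightarrow> x$1 = y$1 \<and> x$2 = y$2 \<and> x$3 = y$3 \<and> x$4 = y$4 \<and> x$5 = y$5 \<and> x$6 = y$6"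
  unfolding vec_eq_iff forall_6 ..

lemma vec_3_eq_iff: "(x::'a^3) = y \<longleftrightarrow> x$1 = y$1 \<and> x$2 = y$2 \<and> x$3 = y$3"
  unfolding vec_eq_iff forall_3 ..

lemma inner_vec_6: "inner (x::real^6) y = x$1*y$1 + x$2*y$2 + x$3*y$3 + x$4*y$4 + x$5*y$5 + x$6*y$6"
  by (simp add: inner_vec_def sum_6)

lemma inner_vec_4: "inner (x::real^4) y = x$1*y$1 + x$2*y$2 + x$3*y$3 + x$4*y$4"
  by (simp add: inner_vec_def sum_4)

lemma inner_vec_3: "inner (x::real^3) y = x$1*y$1 + x$2*y$2 + x$3*y$3"
  by (simp add: inner_vec_def sum_3)

definition ptolemy_sphere :: "(real^6) set" where
  "ptolemy_sphere = {p. norm p = 1 \<and> ptolemy_P p = 0}"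

text \<open>Multiplication on \<open>real^6\<close> is componentwise, so \<open>mass_weights m1 m2 m3 m4 * r\<close>
  rescales \<open>r\<^sub>i\<^sub>j\<close> by \<open>sqrt (m\<^sub>i m\<^sub>j / 2M)\<close>.\<close>
definition mass_weights :: "real \<Rightarrow> real \<Rightarrow> real \<Rightarrow> real \<Rightarrow> real^6" where
  "mass_weights m1 m2 m3 m4 = vector
     [sqrt (m1*m2 / (2*(m1+m2+m3+m4))), sqrt (m1*m3 / (2*(m1+m2+m3+m4))),
      sqrt (m1*m4 / (2*(m1+m2+m3+m4))), sqrt (m2*m3 / (2*(m1+m2+m3+m4))),
      sqrt (m2*m4 / (2*(m1+m2+m3+m4))), sqrt (m3*m4 / (2*(m1+m2+m3+m4)))]"

context
  fixes m1 m2 m3 m4 :: real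
  assumes pos: "m1 > 0" "m2 > 0" "m3 > 0" "m4 > 0"
begin

lemma mass_weights_nonzero: "mass_weights m1 m2 m3 m4 $ i \<noteq> 0"
  using pos exhaust_6[of i] by (auto simp: mass_weights_def)

lemma moment_I_eq_norm_mass_weights:
  "moment_I m1 m2 m3 m4 r = (norm (mass_weights m1 m2 m3 m4 * r))\<^sup>2"
  using pos
  by (simp add: moment_I_def mass_weights_def power2_norm_eq_inner inner_vec_6 power_mult_distrib
      add_divide_distrib flip: power2_eq_square)

lemma ptolemy_P_mass_weights:
  "ptolemy_P (mass_weights m1 m2 m3 m4 * r) =
     sqrt (m1*m2*m3*m4) / (2*(m1+m2+m3+m4)) * ptolemy_P r"
proof -
  define M where "M = m1 + m2 + m3 + m4"
  define K where "K = sqrt (m1*m2*m3*m4) / (2*M)"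
  define k where "k = mass_weights m1 m2 m3 m4"
  have "M > 0" using pos by (simp add: M_def)
  have sqrt_pair: "sqrt (a / (2*M)) * sqrt (b / (2*M)) = sqrt (a*b) / (2*M)"
    if "a \<ge> 0" "b \<ge> 0" for a b
    using \<open>M > 0\<close> that
    by (simp add: real_sqrt_mult[symmetric] real_sqrt_divide power2_eq_square[symmetric])
  have "k$1 * k$6 = K" "k$3 * k$4 = K" "k$2 * k$5 = K"
    unfolding k_def mass_weights_def M_def[symmetric] K_def using pos
    by (simp_all add: sqrt_pair mult.assoc)
  moreover have "ptolemy_P (k * r) = (k$1*k$6)*(r$1*r$6) + (k$3*k$4)*(r$3*r$4) - (k$2*k$5)*(r$2*r$5)"
    by (simp add: ptolemy_P_def ac_simps)
  ultimately have "ptolemy_P (k * r) = K * ptolemy_P r"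
    by (simp add: ptolemy_P_def algebra_simps)
  then show ?thesis
    by (simp add: k_def K_def M_def)
qed

lemma shape_M_eq_vimage:
  "shape_M m1 m2 m3 m4 = (\<lambda>r. mass_weights m1 m2 m3 m4 * r) -` ptolemy_sphere"
proof -
  have "sqrt (m1*m2*m3*m4) / (2*(m1+m2+m3+m4)) > 0"
    using pos by simp
  then show ?thesis
    by (auto simp: shape_M_def ptolemy_sphere_def moment_I_eq_norm_mass_weights
        ptolemy_P_mass_weights power2_norm_eq_inner norm_eq_1)
qed

lemma linearly_isomorphic_shape_M_ptolemy_sphere:
  "linearly_isomorphic_sets (shape_M m1 m2 m3 m4) ptolemy_sphere"
  unfolding shape_M_eq_vimage
  by (rule linearly_isomorphic_sets_vimage[where g = "\<lambda>p. (\<chi> i. inverse (mass_weights m1 m2 m3 m4 $ i)) * p"])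
    (simp_all add: vec_eq_iff mass_weights_nonzero)

end

lemma ptolemy_P_pluecker: "ptolemy_P (pluecker u v) = 0"
  by (simp add: ptolemy_P_def pluecker_def algebra_simps)

lemma inner_pluecker:
  "inner (pluecker a b) (pluecker c d) = inner a c * inner b d - inner a d * inner b c"
  by (simp add: pluecker_def inner_vec_6 inner_vec_4 algebra_simps)

lemma pluecker_scaleR: "pluecker (s *\<^sub>R a) (t *\<^sub>R b) = (s * t) *\<^sub>R pluecker a b"
  by (simp add: pluecker_def vec_6_eq_iff algebra_simps)

lemma pluecker_diff_scaleR_right: "pluecker a (b - t *\<^sub>R a) = pluecker a b"
  by (simp add: pluecker_def vec_6_eq_iff algebra_simps)

lemma pluecker_0_left: "pluecker 0 b = 0"
  by (simp add: pluecker_def vec_6_eq_iff)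

text \<open>The skew-symmetric matrix of the bivector \<open>p\<close>; its \<open>i\<close>-th row is the contraction of \<open>p\<close>
  with \<open>e\<^sub>i\<close>, which for decomposable \<open>p\<close> lies in the plane of \<open>p\<close>.\<close>
definition bivector_matrix :: "real^6 \<Rightarrow> real^4^4" where
  "bivector_matrix p = vector
     [vector [0, p$1, p$2, p$3], vector [-p$1, 0, p$4, p$5],
      vector [-p$2, -p$4, 0, p$6], vector [-p$3, -p$5, -p$6, 0]]"

lemma pluecker_bivector_matrix_rows:
  assumes "ptolemy_P p = 0"
  defines "B \<equiv> bivector_matrix p"
  shows "pluecker (B$1) (B$2) = p$1 *\<^sub>R p" "pluecker (B$1) (B$3) = p$2 *\<^sub>R p"
    "pluecker (B$1) (B$4) = p$3 *\<^sub>R p" "pluecker (B$2) (B$3) = p$4 *\<^sub>R p"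
    "pluecker (B$2) (B$4) = p$5 *\<^sub>R p" "pluecker (B$3) (B$4) = p$6 *\<^sub>R p"
  using assms
  by (auto simp: B_def bivector_matrix_def pluecker_def ptolemy_P_def vec_6_eq_iff algebra_simps;
      linarith)+

lemma pluecker_multiple_if_ptolemy:
  assumes "ptolemy_P p = 0" "p \<noteq> 0"
  obtains a b c where "c \<noteq> 0" "pluecker a b = c *\<^sub>R p"
proof -
  have "p$1 \<noteq> 0 \<or> p$2 \<noteq> 0 \<or> p$3 \<noteq> 0 \<or> p$4 \<noteq> 0 \<or> p$5 \<noteq> 0 \<or> p$6 \<noteq> 0"
    using assms(2) by (simp add: vec_6_eq_iff)
  then show thesis
    using that pluecker_bivector_matrix_rows[OF assms(1)] by metis
qed

lemma pluecker_orthogonalize: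
  obtains w where "inner a w = 0" "pluecker a w = pluecker a b"
proof (cases "a = 0")
  case True
  then show thesis using that[of 0] by (simp add: pluecker_0_left)
next
  case False
  define w where "w = b - (inner a b / inner a a) *\<^sub>R a"
  have "inner a w = 0" using False by (simp add: w_def inner_diff_right)
  moreover have "pluecker a w = pluecker a b" by (simp add: w_def pluecker_diff_scaleR_right)
  ultimately show thesis by (rule that)
qed

lemma unit_pluecker_multiple_in_oriented_grassmannian:
  assumes "pluecker a b = c *\<^sub>R p" "c \<noteq> 0" "norm p = 1"
  shows "p \<in> oriented_grassmannian_2_4"
proof -
  obtain w where aw: "inner a w = 0" and pw: "pluecker a w = c *\<^sub>R p"
    using pluecker_orthogonalize[of a b] assms(1) by metis
  have "\<bar>c\<bar>\<^sup>2 = inner (pluecker a w) (pluecker a w)"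
    using pw assms(3) by (simp add: power2_eq_square norm_eq_1[symmetric] flip: abs_mult)
  also have "\<dots> = (norm a * norm w)\<^sup>2"
    by (simp add: inner_pluecker aw power_mult_distrib power2_norm_eq_inner)
  finally have cn: "\<bar>c\<bar> = norm a * norm w"
    using power2_eq_iff_nonneg[of "\<bar>c\<bar>" "norm a * norm w"] by simp
  define u where "u = (1 / norm a) *\<^sub>R a"
  define v where "v = (sgn c / norm w) *\<^sub>R w"
  have "norm u = 1" "norm v = 1" "inner u v = 0"
    using cn assms(2) by (auto simp: u_def v_def aw abs_sgn sgn_0_0)
  moreover have "pluecker u v = p"
    using assms(2) by (simp add: u_def v_def pluecker_scaleR pw sgn_if flip: cn)
  ultimately show ?thesis
    unfolding oriented_grassmannian_2_4_def by blast
qed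

lemma oriented_grassmannian_2_4_eq_ptolemy_sphere:
  "oriented_grassmannian_2_4 = ptolemy_sphere"
proof (intro antisym subsetI)
  fix p assume "p \<in> oriented_grassmannian_2_4"
  then obtain u v where "p = pluecker u v" "norm u = 1" "norm v = 1" "inner u v = 0"
    unfolding oriented_grassmannian_2_4_def by blast
  then show "p \<in> ptolemy_sphere"
    by (simp add: ptolemy_sphere_def ptolemy_P_pluecker norm_eq_1 inner_pluecker inner_commute)
next
  fix p assume "p \<in> ptolemy_sphere"
  then have "norm p = 1" "ptolemy_P p = 0" by (auto simp: ptolemy_sphere_def)
  then show "p \<in> oriented_grassmannian_2_4"
    by (metis pluecker_multiple_if_ptolemy unit_pluecker_multiple_in_oriented_grassmannian norm_zero
        zero_neq_one)
qed

text \<open>The coordinates of \<open>p + *p\<close> and \<open>p - *p\<close> in the bases \<open>e\<^sub>1\<^sub>2 \<plusminus> e\<^sub>3\<^sub>4, e\<^sub>1\<^sub>3 \<plusminus> e\<^sub>4\<^sub>2, e\<^sub>1\<^sub>4 \<plusminus> e\<^sub>2\<^sub>3\<close>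
  of the (anti-)self-dual bivectors, \<open>*\<close> being the Hodge star.\<close>
definition selfdual_split :: "real^6 \<Rightarrow> (real^3) \<times> (real^3)" where
  "selfdual_split p =
     (vector [p$1 + p$6, p$2 - p$5, p$3 + p$4], vector [p$1 - p$6, p$2 + p$5, p$3 - p$4])"

definition selfdual_join :: "(real^3) \<times> (real^3) \<Rightarrow> real^6" where
  "selfdual_join z = (1/2) *\<^sub>R vector
     [fst z$1 + snd z$1, fst z$2 + snd z$2, fst z$3 + snd z$3,
      fst z$3 - snd z$3, snd z$2 - fst z$2, fst z$1 - snd z$1]"

lemma linear_selfdual_split: "linear selfdual_split"
  by (rule linearI) (simp_all add: selfdual_split_def vec_3_eq_iff algebra_simps)

lemma linear_selfdual_join: "linear selfdual_join"
  by (rule linearI) (simp_all add: selfdual_join_def vec_6_eq_iff algebra_simps)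

lemma selfdual_join_split: "selfdual_join (selfdual_split p) = p"
  by (simp add: selfdual_split_def selfdual_join_def vec_6_eq_iff)

lemma selfdual_split_join: "selfdual_split (selfdual_join z) = z"
  by (simp add: selfdual_split_def selfdual_join_def prod_eq_iff vec_3_eq_iff field_simps)

lemma norm_selfdual_split:
  "(norm (fst (selfdual_split p)))\<^sup>2 = (norm p)\<^sup>2 + 2 * ptolemy_P p"
  "(norm (snd (selfdual_split p)))\<^sup>2 = (norm p)\<^sup>2 - 2 * ptolemy_P p"
  unfolding power2_norm_eq_inner
  by (simp_all add: selfdual_split_def ptolemy_P_def inner_vec_6 inner_vec_3 algebra_simps)

lemma ptolemy_sphere_eq_vimage: "ptolemy_sphere = selfdual_split -` sphere2_times_sphere2"
proof -
  have "norm (fst (selfdual_split p)) = 1 \<and> norm (snd (selfdual_split p)) = 1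
          \<longleftrightarrow> norm p = 1 \<and> ptolemy_P p = 0" for p
    unfolding norm_eq_1 power2_norm_eq_inner[symmetric] norm_selfdual_split by linarith
  then show ?thesis
    by (simp add: set_eq_iff ptolemy_sphere_def sphere2_times_sphere2_def mem_Times_iff)
qed

lemma linearly_isomorphic_ptolemy_sphere_sphere2_times_sphere2:
  "linearly_isomorphic_sets ptolemy_sphere sphere2_times_sphere2"
  unfolding ptolemy_sphere_eq_vimage
  by (rule linearly_isomorphic_sets_vimage[OF linear_selfdual_split linear_selfdual_join
        selfdual_join_split selfdual_split_join])

theorem lemma4:
  fixes m1 m2 m3 m4 :: real
  assumes "m1 > 0" "m2 > 0" "m3 > 0" "m4 > 0"
  shows "diffeomorphic_sets (shape_M m1 m2 m3 m4) oriented_grassmannian_2_4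
       \<and> diffeomorphic_sets (shape_M m1 m2 m3 m4) sphere2_times_sphere2"
proof -
  have "linearly_isomorphic_sets (shape_M m1 m2 m3 m4) ptolemy_sphere"
    using assms by (rule linearly_isomorphic_shape_M_ptolemy_sphere)
  moreover note linearly_isomorphic_ptolemy_sphere_sphere2_times_sphere2
  ultimately show ?thesis
    unfolding oriented_grassmannian_2_4_eq_ptolemy_sphere
    by (blast intro: diffeomorphic_sets_if_linearly_isomorphic linearly_isomorphic_sets_trans)
qed

end
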